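(* Let $\mathcal N=\{N_1,\ldots,N_\ell\}$ ($\ell\ge4$) be a family of $k$-sets satisfying properties (i) and (ii) below, $m=|V|-k$, and fix any run of the decomposition process described in the context. Then the number of indices $x\in\{1,\dots,\ell\}$ with $|\Gamma_x|\ge m^{1/3}$ (heavy $k$-sets) is at most $3m^{2/3}$.
   Context: Setting: $k\ge3$, $\mathcal N=\{N_1,\dots,N_\ell\}$ a family of $k$-subsets, $V=\bigcup N_i$, $n=|V|$, $m=n-k$, satisfying (i) $\bigcap_{i}N_i=\varnothing$ but $\bigcap_{j\ne i}N_j\ne\varnothing$ for all $i$; (ii) every $S\subseteq V$ with $|S|\ge k+1$ contains a $3$-set $T$ not contained in any $N_i$. Assume $\ell\ge4$. Decomposition process: Stage $0$: $\ell_0=\ell$; for each $i\le\ell_0$ choose $a_i^{(0)}\in\bigcap_{r\ne i}N_r$; kernel $A^{(0)}=\{a_1^{(0)},\dots,a_{\ell_0}^{(0)}\}$. Having defined stages $0,\dots,j$ (with surviving sets $N_1,\dots,N_{\ell_j}$, $\ell_j\ge4$, and kernels $A^{(0)},\dots,A^{(j)}$), consider $R^{(j)}=\{N_r\setminus\bigcup_{s\le j}A^{(s)} : r\le\ell_j\}$, which has empty intersection. If every subfamily of $R^{(j)}$ minimal with respect to having empty intersection has only $2$ or $3$ members, stop and set $t=j$. Otherwise choose such a minimal subfamily with at least $4$ members; after reindexing assume it consists of the truncations $N_r\setminus\bigcup_{s\le j}A^{(s)}$, $r\le\ell_{j+1}$; choose $a_i^{(j+1)}\in\bigcap_{r\le\ell_{j+1},r\ne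 i}\bigl(N_r\setminus\bigcup_{s\le j}A^{(s)}\bigr)$ for $i\le\ell_{j+1}$, and let $A^{(j+1)}$ be the set of these. Let $A=\bigcup_{s\le t}A^{(s)}$ and $G=V\setminus A$. For each $i$ let $t_i=\max\{j: i\le\ell_j\}$. For $g\in G$, $t_g=\max\{t_i: g\in N_i\}$ and $I_g=\{i: g\in N_i,\ t_i=t_g\}$. For $x\in\{1,\dots,\ell\}$, $\Gamma_x=\{g\in G: I_g=\{x\}\}$. *)

theory Defs
  imports Complex_Main
begin

definition min_empty :: "(nat \<Rightarrow> 'a set) \<Rightarrow> nat set \<Rightarrow> bool" where
  "min_empty T J \<longleftrightarrow> (\<Inter>r\<in>J. T r) = {} \<and> (\<forall>i\<in>J. (\<Inter>r\<in>J - {i}. T r) \<noteq> {})"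

definition kern :: "(nat \<Rightarrow> nat \<Rightarrow> 'a) \<Rightarrow> (nat \<Rightarrow> nat set) \<Rightarrow> nat \<Rightarrow> 'a set" where
  "kern a I j = (\<Union>s\<le>j. a s ` I s)"

text \<open>A run of the decomposition process with final stage t: I j is the set of (original)
  indices of the surviving sets at stage j, a j i is the chosen kernel element a_i^(j).\<close>
definition decomp_run ::
  "(nat \<Rightarrow> 'a set) \<Rightarrow> nat \<Rightarrow> nat \<Rightarrow> (nat \<Rightarrow> nat set) \<Rightarrow> (nat \<Rightarrow> nat \<Rightarrow> 'a) \<Rightarrow> bool" where
  "decomp_run N l t I a \<longleftrightarrow>
     I 0 = {1..l} \<and>
     (\<forall>i\<in>I 0. a 0 i \<in> (\<Inter>r\<in>I 0 - {i}. N r)) \<and>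
     (\<forall>j<t. I (Suc j) \<subseteq> I j \<and> card (I (Suc j)) \<ge> 4 \<and>
            min_empty (\<lambda>r. N r - kern a I j) (I (Suc j)) \<and>
            (\<forall>i\<in>I (Suc j). a (Suc j) i \<in> (\<Inter>r\<in>I (Suc j) - {i}. N r - kern a I j))) \<and>
     (\<forall>J\<subseteq>I t. min_empty (\<lambda>r. N r - kern a I t) J \<longrightarrow> card J = 2 \<or> card J = 3)"

text \<open>t_i = max{j : i \<le> l_j}\<close>
definition t_idx :: "(nat \<Rightarrow> nat set) \<Rightarrow> nat \<Rightarrow> nat \<Rightarrow> nat" where
  "t_idx I t i = Max {j. j \<le> t \<and> i \<in> I j}"

definition t_elt :: "(nat \<Rightarrow> 'a set) \<Rightarrow> nat \<Rightarrow> (nat \<Rightarrow> nat set) \<Rightarrow> nat \<Rightarrow> 'a \<Rightarrow> nat" where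
  "t_elt N l I t g = Max {t_idx I t i | i. i \<in> {1..l} \<and> g \<in> N i}"

definition I_elt :: "(nat \<Rightarrow> 'a set) \<Rightarrow> nat \<Rightarrow> (nat \<Rightarrow> nat set) \<Rightarrow> nat \<Rightarrow> 'a \<Rightarrow> nat set" where
  "I_elt N l I t g = {i \<in> {1..l}. g \<in> N i \<and> t_idx I t i = t_elt N l I t g}"

definition Gamma ::
  "(nat \<Rightarrow> 'a set) \<Rightarrow> nat \<Rightarrow> nat \<Rightarrow> (nat \<Rightarrow> nat set) \<Rightarrow> (nat \<Rightarrow> nat \<Rightarrow> 'a) \<Rightarrow> nat \<Rightarrow> 'a set" where
  "Gamma N l t I a x = {g \<in> (\<Union>i\<in>{1..l}. N i) - kern a I t. I_elt N l I t g = {x}}"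

end

theory Submission
  imports Defs "HOL-Library.Disjoint_Sets"
begin

text \<open>Let \<open>x\<^sub>0\<close> be an index whose last surviving stage \<open>t\<^sub>x\<^sub>0\<close> is maximal. Every
  \<open>g \<in> N\<^sub>x\<^sub>0\<close> then has \<open>t\<^sub>g = t\<^sub>x\<^sub>0\<close>, so \<open>x\<^sub>0 \<in> I\<^sub>g\<close>, and hence \<open>g\<close> lies in no \<open>\<Gamma>\<^sub>y\<close>
  with \<open>y \<noteq> x\<^sub>0\<close>. These \<open>\<Gamma>\<^sub>y\<close> are pairwise disjoint subsets of \<open>V - N\<^sub>x\<^sub>0\<close>, which has
  exactly \<open>m\<close> elements, so at most \<open>m powr (2/3)\<close> of them have at least \<open>m powr (1/3)\<close>
  elements; counting \<open>x\<^sub>0\<close> as well gives at most \<open>m powr (2/3) + 1 \<le> 3 * m powr (2/3)\<close>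
  heavy indices. Property (i) is needed only for \<open>m \<ge> 1\<close>.\<close>

lemma card_Union_gt_if_Inter_empty:
  assumes "finite J" "J \<noteq> {}" "k > 0"
    and ksets: "\<forall>i\<in>J. finite (N i) \<and> card (N i) = k"
    and "(\<Inter>i\<in>J. N i) = {}"
  shows "k < card (\<Union>i\<in>J. N i)"
proof (rule ccontr)
  let ?V = "\<Union>i\<in>J. N i"
  assume "\<not> k < card ?V"
  have "N i = ?V" if "i \<in> J" for i
  proof (rule card_subset_eq)
    show "finite ?V" "N i \<subseteq> ?V" using that ksets \<open>finite J\<close> by auto
    then have "card (N i) \<le> card ?V" by (rule card_mono)
    then show "card (N i) = card ?V"
      using that ksets \<open>\<not> k < card ?V\<close> by simp
  qed
  moreover obtain i where "i \<in> J" using \<open>J \<noteq> {}\<close> by blast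
  ultimately have "N i \<subseteq> (\<Inter>i\<in>J. N i)" by blast
  moreover have "N i \<noteq> {}"
    using \<open>i \<in> J\<close> ksets \<open>k > 0\<close> by fastforce
  ultimately show False using \<open>(\<Inter>i\<in>J. N i) = {}\<close> by blast
qed

lemma card_heavy_mult_le_card:
  fixes B :: "'i \<Rightarrow> 'a set" and c :: real
  assumes "finite X" "disjoint_family_on B X" "(\<Union>x\<in>X. B x) \<subseteq> S" "finite S"
  shows "real (card {x \<in> X. c \<le> real (card (B x))}) * c \<le> real (card S)"
proof -
  let ?H = "{x \<in> X. c \<le> real (card (B x))}"
  have fin_B: "finite (B x)" if "x \<in> X" for x
    using that assms(3,4) by (meson UN_subset_iff finite_subset)
  have "real (card ?H) * c \<le> (\<Sum>x\<in>?H. real (card (B x)))"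
    by (rule sum_bounded_below) simp
  also have "\<dots> = real (card (\<Union>x\<in>?H. B x))"
    using assms(1,2) fin_B
    by (subst card_UN_disjoint) (auto simp: disjoint_family_on_def)
  also have "\<dots> \<le> real (card S)"
    using assms(3,4) by (intro of_nat_mono card_mono) auto
  finally show ?thesis .
qed

lemma le_powr_two_thirds_if_mult_powr_one_third_le:
  fixes M n :: real
  assumes "M > 0" "n * M powr (1/3) \<le> M"
  shows "n \<le> M powr (2/3)"
proof -
  have "n * M powr (1/3) \<le> M powr (2/3) * M powr (1/3)"
    using assms by (simp add: powr_add[symmetric])
  then show ?thesis using \<open>M > 0\<close> by simp
qed

lemma in_I_elt_if_t_idx_maximal:
  assumes "x\<^sub>0 \<in> {1..l}" "\<forall>i\<in>{1..l}. t_idx I t i \<le> t_idx I t x\<^sub>0" "g \<in> N x\<^sub>0"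
  shows "x\<^sub>0 \<in> I_elt N l I t g"
proof -
  have "finite {t_idx I t i | i. i \<in> {1..l} \<and> g \<in> N i}"
    by (rule finite_subset[of _ "t_idx I t ` {1..l}"]) auto
  then have "t_idx I t x\<^sub>0 \<le> t_elt N l I t g"
    unfolding t_elt_def using assms(1,3) by (intro Max_ge) auto
  moreover have "t_elt N l I t g \<le> t_idx I t x\<^sub>0"
    unfolding t_elt_def using assms by (subst Max_le_iff) auto
  ultimately show ?thesis
    unfolding I_elt_def using assms(1,3) by simp
qed

lemma Gamma_disjoint_N_if_t_idx_maximal:
  assumes "x\<^sub>0 \<in> {1..l}" "\<forall>i\<in>{1..l}. t_idx I t i \<le> t_idx I t x\<^sub>0" "y \<noteq> x\<^sub>0"
  shows "Gamma N l t I a y \<inter> N x\<^sub>0 = {}"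
proof -
  have "I_elt N l I t g \<noteq> {y}" if "g \<in> N x\<^sub>0" for g
    using in_I_elt_if_t_idx_maximal[of x\<^sub>0 l I t g N, OF assms(1,2) that] assms(3) by auto
  then show ?thesis unfolding Gamma_def by blast
qed

lemma Gamma_subset_Union: "Gamma N l t I a x \<subseteq> (\<Union>i\<in>{1..l}. N i)"
  unfolding Gamma_def by blast

lemma disjoint_family_Gamma: "disjoint_family_on (Gamma N l t I a) X"
  unfolding disjoint_family_on_def Gamma_def by auto

theorem lemma12:
  fixes N :: "nat \<Rightarrow> 'a set" and k l t :: nat
    and I :: "nat \<Rightarrow> nat set" and a :: "nat \<Rightarrow> nat \<Rightarrow> 'a"
  assumes k3: "k \<ge> 3"
    and l4: "l \<ge> 4"
    and ksets: "\<forall>i\<in>{1..l}. finite (N i) \<and> card (N i) = k"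
    and prop_i: "(\<Inter>i\<in>{1..l}. N i) = {} \<and> (\<forall>i\<in>{1..l}. (\<Inter>j\<in>{1..l} - {i}. N j) \<noteq> {})"
    and prop_ii: "\<forall>S \<subseteq> (\<Union>i\<in>{1..l}. N i). card S \<ge> k + 1 \<longrightarrow>
                    (\<exists>T\<subseteq>S. card T = 3 \<and> (\<forall>i\<in>{1..l}. \<not> T \<subseteq> N i))"
    and run: "decomp_run N l t I a"
  shows "real (card {x \<in> {1..l}.
            real (card (Gamma N l t I a x)) \<ge> real (card (\<Union>i\<in>{1..l}. N i) - k) powr (1/3)})
         \<le> 3 * real (card (\<Union>i\<in>{1..l}. N i) - k) powr (2/3)"
proof -
  define V where "V = (\<Union>i\<in>{1..l}. N i)"
  define m where "m = real (card V - k)"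
  define heavy where "heavy X = {x \<in> X. m powr (1/3) \<le> real (card (Gamma N l t I a x))}" for X
  have "k < card V"
    unfolding V_def using l4 k3 ksets prop_i by (intro card_Union_gt_if_Inter_empty) auto
  then have m_ge_1: "m \<ge> 1" unfolding m_def by simp
  obtain x\<^sub>0 where "x\<^sub>0 \<in> {1..l}" "t_idx I t x\<^sub>0 = Max (t_idx I t ` {1..l})"
    using Max_in[of "t_idx I t ` {1..l}"] l4 by fastforce
  then have x\<^sub>0: "x\<^sub>0 \<in> {1..l}" "\<forall>i\<in>{1..l}. t_idx I t i \<le> t_idx I t x\<^sub>0"
    by simp_all
  have fin_V: "finite V" unfolding V_def using ksets by auto
  have "Gamma N l t I a y \<subseteq> V - N x\<^sub>0" if "y \<in> {1..l} - {x\<^sub>0}" for y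
    using Gamma_subset_Union[of N l t I a y] that
      Gamma_disjoint_N_if_t_idx_maximal[OF x\<^sub>0, where y = y and N = N and a = a]
    unfolding V_def by blast
  then have Gamma_outside: "(\<Union>y\<in>{1..l} - {x\<^sub>0}. Gamma N l t I a y) \<subseteq> V - N x\<^sub>0"
    by (rule UN_least)
  have "real (card (heavy ({1..l} - {x\<^sub>0}))) * m powr (1/3) \<le> real (card (V - N x\<^sub>0))"
    unfolding heavy_def using fin_V
    by (intro card_heavy_mult_le_card[OF _ disjoint_family_Gamma Gamma_outside]) auto
  also have "card (V - N x\<^sub>0) = card V - k"
    using x\<^sub>0(1) ksets by (subst card_Diff_subset) (auto simp: V_def)
  finally have "real (card (heavy ({1..l} - {x\<^sub>0}))) \<le> m powr (2/3)"
    using m_ge_1 unfolding m_def by (intro le_powr_two_thirds_if_mult_powr_one_third_le) auto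
  moreover have "card (heavy {1..l}) \<le> card (heavy ({1..l} - {x\<^sub>0})) + 1"
  proof -
    have "heavy ({1..l} - {x\<^sub>0}) = heavy {1..l} - {x\<^sub>0}"
      unfolding heavy_def by blast
    then show ?thesis by (simp add: card_Diff_singleton_if) arith
  qed
  moreover have "1 \<le> m powr (2/3)" using m_ge_1 by (simp add: ge_one_powr_ge_zero)
  ultimately have "real (card (heavy {1..l})) \<le> 3 * m powr (2/3)" by linarith
  then show ?thesis unfolding heavy_def m_def V_def .
qed

end
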